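(* Let $n\ge 3$. The reciprocal status Hosoya polynomial of the power graph $P(G(n))$ of the gyrogroup $G(n)$ (defined in the context) is $$H_{rs}(P(G(n)),x)=(2^{n-1}-1)x^{\frac{2^{n+2}-2^{n-1}-4}{2}}+2^{n-1}x^{2^n+2^{n-1}-1}+\binom{2^{n-1}-1}{2}x^{2^n+2^{n-1}-2}.$$
   Context: Let $n\ge 3$ be an integer and $m=2^{n-1}$. Let $P(n)=\{0,1,\dots,m-1\}$, $H(n)=\{m,m+1,\dots,2^n-1\}$ and $G(n)=P(n)\cup H(n)$. For $i,j\in G(n)$ let $t,s,k\in P(n)$ be the residues modulo $m$ (taken in $\{0,\dots,m-1\}$) of $i+j$, $i+(\frac m2-1)j$ and $(\frac m2+1)i+(\frac m2-1)j$, respectively, and define $i\oplus j=t$ if $i,j\in P(n)$; $i\oplus j=t+m$ if $i\in P(n),j\in H(n)$; $i\oplus j=s+m$ if $i\in H(n),j\in P(n)$; $i\oplus j=k$ if $i,j\in H(n)$. Then $(G(n),\oplus)$ is a gyrogroup with identity $e=0$. Powers are defined by $a^1=a$, $a^{k+1}=a^k\oplus a$. The power graph $P(G(n))$ is the simple undirected graph with vertex set $G(n)$ in which distinct vertices $u,v$ are adjacent if and only if $u^k=v$ or $v^k=u$ for some positive integer $k$. For a connected graph $G$ with distance $d$, the reciprocal status of a vertex $v$ is $rs(v)=\sum_{u\in V(G),u\ne v}\frac{1}{d(u,v)}$, and the reciprocal status Hosoya polynomial is $H_{rs}(G,x)=\sum_{uv\in E(G)}x^{rs(u)+rs(v)}$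 (sum over edges). *)

theory Defs
  imports Complex_Main
begin

definition gy_op :: "nat \<Rightarrow> nat \<Rightarrow> nat \<Rightarrow> nat" where
  "gy_op n i j = (let m = 2^(n-1);
      t = (i + j) mod m;
      s = (i + (m div 2 - 1) * j) mod m;
      k = ((m div 2 + 1) * i + (m div 2 - 1) * j) mod m
    in if i < m \<and> j < m then t
       else if i < m \<and> \<not> j < m then t + m
       else if \<not> i < m \<and> j < m then s + m
       else k)"

text \<open>Powers: a^1 = a, a^(k+1) = a^k (+) a. The value at 0 is irrelevant (only k >= 1 used).\<close>
fun gy_pow :: "nat \<Rightarrow> nat \<Rightarrow> nat \<Rightarrow> nat" where
  "gy_pow n a 0 = 0"
| "gy_pow n a (Suc k) = (if k = 0 then a else gy_op n (gy_pow n a k) a)"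

definition gy_carrier :: "nat \<Rightarrow> nat set" where
  "gy_carrier n = {0..<2^n}"

definition pg_adj :: "nat \<Rightarrow> nat \<Rightarrow> nat \<Rightarrow> bool" where
  "pg_adj n u v \<longleftrightarrow> u \<in> gy_carrier n \<and> v \<in> gy_carrier n \<and> u \<noteq> v \<and>
     (\<exists>k\<ge>1. gy_pow n u k = v \<or> gy_pow n v k = u)"

definition pg_edges :: "nat \<Rightarrow> (nat \<times> nat) set" where
  "pg_edges n = {(u, v). pg_adj n u v}"

definition pg_dist :: "nat \<Rightarrow> nat \<Rightarrow> nat \<Rightarrow> nat" where
  "pg_dist n u v = (LEAST k. (u, v) \<in> pg_edges n ^^ k)"

definition recip_status :: "nat \<Rightarrow> nat \<Rightarrow> real" where
  "recip_status n v = (\<Sum>u \<in> gy_carrier n - {v}. 1 / real (pg_dist n u v))"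

text \<open>Reciprocal status Hosoya polynomial, evaluated at x > 0; each undirected edge
  {u,v} is counted once (as the pair with u < v).\<close>
definition H_rs :: "nat \<Rightarrow> real \<Rightarrow> real" where
  "H_rs n x = (\<Sum>(u, v) \<in> {(u, v). pg_adj n u v \<and> u < v}.
                 x powr (recip_status n u + recip_status n v))"

end

theory Submission
  imports Defs "HOL-Number_Theory.Cong"
begin

(*
  Let m = 2^(n-1). On P(n) = {0..<m} (the "low" elements) the operation is addition modulo m,
  and the power graph of the cyclic 2-group Z_m is complete because its subgroups form a chain.
  Every "high" element h of H(n) satisfies h (+) h = 0 and 0 (+) h = h, so its only powers are
  h and 0. Hence the power graph is the complete graph on P(n) with one pendant vertex h
  attached to 0 for every h in H(n). Since 0 is adjacent to all vertices, distances are 1 or 2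
  and rs(v) = (2^n - 1 + deg v) / 2, which is 2m - 1, 3m/2 - 1 and m on 0, on P(n) - {0} and
  on H(n). Summing over the three kinds of edges {0,p}, {0,h}, {p,q} gives the polynomial.
*)

lemma card_increasing_pairs:
  fixes A :: "'a::linorder set"
  assumes "finite A"
  shows "card {(p, q). p \<in> A \<and> q \<in> A \<and> p < q} = card A choose 2"
proof -
  have "bij_betw (\<lambda>(p, q). {p, q}) {(p, q). p \<in> A \<and> q \<in> A \<and> p < q} {B. B \<subseteq> A \<and> card B = 2}"
  proof (rule bij_betwI')
    show "(\<lambda>(p, q). {p, q}) x = (\<lambda>(p, q). {p, q}) y \<longleftrightarrow> x = y"
      if "x \<in> {(p, q). p \<in> A \<and> q \<in> A \<and> p < q}" "y \<in> {(p, q). p \<in> A \<and> q \<in> A \<and> p < q}" for x y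
      using that by (auto simp: doubleton_eq_iff)
    show "(\<lambda>(p, q). {p, q}) x \<in> {B. B \<subseteq> A \<and> card B = 2}"
      if "x \<in> {(p, q). p \<in> A \<and> q \<in> A \<and> p < q}" for x
      using that by auto
    show "\<exists>x \<in> {(p, q). p \<in> A \<and> q \<in> A \<and> p < q}. B = (\<lambda>(p, q). {p, q}) x"
      if B: "B \<in> {B. B \<subseteq> A \<and> card B = 2}" for B
    proof -
      obtain x y where "B = {x, y}" "x \<noteq> y"
        using B by (auto simp: card_2_iff)
      then obtain p q where "B = {p, q}" "p < q"
        by (metis insert_commute neq_iff)
      then show ?thesis using B by auto
    qed
  qed
  then show ?thesis
    using n_subsets[OF assms, of 2] by (simp add: bij_betw_same_card)
qed

lemma mult_mod_eq_if_gcd_dvd: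
  fixes u v m :: nat
  assumes "0 < m" and "gcd u m dvd v"
  shows "\<exists>k\<ge>1. k * u mod m = v mod m"
proof -
  obtain k where "[u * k = v] (mod m)"
    using cong_solve_dvd_nat[OF assms(2)] by blast
  then have "(k + m) * u mod m = v mod m"
    by (simp add: cong_def algebra_simps)
  then show ?thesis
    using assms(1) by (intro exI[of _ "k + m"]) auto
qed

lemma mult_mod_prime_power_comparable:
  fixes p u v j :: nat
  assumes "prime p" and "u < p ^ j" and "v < p ^ j"
  shows "\<exists>k\<ge>1. k * u mod p ^ j = v \<or> k * v mod p ^ j = u"
proof -
  obtain a b where a: "gcd u (p ^ j) = p ^ a" and b: "gcd v (p ^ j) = p ^ b"
    using divides_primepow_nat[OF assms(1)] by (meson gcd_dvd2)
  have "0 < p ^ j"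
    using assms(1) by (simp add: prime_gt_0_nat)
  show ?thesis
  proof (cases "a \<le> b")
    case True
    then have "gcd u (p ^ j) dvd v"
      using a b by (metis gcd_dvd1 dvd_trans le_imp_power_dvd)
    then show ?thesis
      using mult_mod_eq_if_gcd_dvd[OF \<open>0 < p ^ j\<close>] assms(3) by fastforce
  next
    case False
    then have "gcd v (p ^ j) dvd u"
      using a b by (metis gcd_dvd1 dvd_trans le_imp_power_dvd nat_le_linear)
    then show ?thesis
      using mult_mod_eq_if_gcd_dvd[OF \<open>0 < p ^ j\<close>] assms(2) by fastforce
  qed
qed

lemma gy_op_low_low:
  "i < 2^(n-1) \<Longrightarrow> j < 2^(n-1) \<Longrightarrow> gy_op n i j = (i + j) mod 2^(n-1)"
  by (simp add: gy_op_def)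

lemma gy_op_zero_high:
  assumes "2^(n-1) \<le> a" and "a < 2^n"
  shows "gy_op n 0 a = a"
proof -
  have "a < 2 * 2^(n-1)"
    using assms(2) by (cases n) auto
  then have "a mod 2^(n-1) = a - 2^(n-1)"
    using assms(1) by (simp add: le_mod_geq)
  then show ?thesis
    using assms(1) by (simp add: gy_op_def)
qed

lemma gy_op_high_self:
  assumes "2^(n-1) \<le> a"
  shows "gy_op n a a = 0"
proof -
  have "(2^(n-1) div 2 + 1) + (2^(n-1) div 2 - 1) = (2::nat)^(n-1)"
    by (cases "n - 1") auto
  then have "(2^(n-1) div 2 + 1) * a + (2^(n-1) div 2 - 1) * a = 2^(n-1) * a"
    by (metis add_mult_distrib)
  then show ?thesis
    using assms by (simp add: gy_op_def)
qed

lemma gy_pow_low: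
  assumes "a < 2^(n-1)"
  shows "1 \<le> k \<Longrightarrow> gy_pow n a k = k * a mod 2^(n-1)"
proof (induction k)
  case (Suc k)
  show ?case
  proof (cases "k = 0")
    case False
    then have "gy_pow n a (Suc k) = (k * a mod 2^(n-1) + a) mod 2^(n-1)"
      using Suc assms by (simp add: gy_op_low_low)
    also have "\<dots> = Suc k * a mod 2^(n-1)"
      by (simp add: mod_add_right_eq add.commute)
    finally show ?thesis .
  qed (use assms in simp)
qed simp

lemma gy_pow_high:
  assumes "2^(n-1) \<le> a" and "a < 2^n"
  shows "1 \<le> k \<Longrightarrow> gy_pow n a k = (if odd k then a else 0)"
proof (induction k)
  case (Suc k)
  then show ?case
    using gy_op_high_self[OF assms(1)] gy_op_zero_high[OF assms] by (cases "k = 0") auto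
qed simp

lemma gt_0_if_pow2_le: "2 ^ k \<le> h \<Longrightarrow> 0 < (h::nat)"
  by (meson order_less_le_trans pos2 zero_less_power)

lemma low_in_gy_carrier: "u < 2^(n-1) \<Longrightarrow> u \<in> gy_carrier n"
  using order_less_le_trans[OF _ power_increasing[of "n-1" n "2::nat"]]
  by (simp add: gy_carrier_def)

lemma pg_adj_sym: "pg_adj n u v \<longleftrightarrow> pg_adj n v u"
  unfolding pg_adj_def by blast

lemma pg_adj_carrier: "pg_adj n u v \<Longrightarrow> u \<in> gy_carrier n"
  by (simp add: pg_adj_def)

lemma pg_adj_irrefl: "\<not> pg_adj n u u"
  by (simp add: pg_adj_def)

lemma pg_adj_low_low:
  assumes "u < 2^(n-1)" and "v < 2^(n-1)" and "u \<noteq> v"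
  shows "pg_adj n u v"
proof -
  have carrier: "u \<in> gy_carrier n" "v \<in> gy_carrier n"
    using assms(1,2) by (simp_all add: low_in_gy_carrier)
  obtain k where "1 \<le> k" "k * u mod 2^(n-1) = v \<or> k * v mod 2^(n-1) = u"
    using mult_mod_prime_power_comparable[OF two_is_prime_nat assms(1,2)] by blast
  then show ?thesis
    using carrier assms gy_pow_low[OF assms(1)] gy_pow_low[OF assms(2)]
    unfolding pg_adj_def by auto
qed

lemma pg_adj_zero_high:
  assumes "2^(n-1) \<le> h" and "h < 2^n"
  shows "pg_adj n 0 h"
proof -
  have "gy_pow n h 2 = 0"
    using gy_pow_high[OF assms] by simp
  moreover have "0 < h"
    using assms(1) by (rule gt_0_if_pow2_le)
  ultimately show ?thesis
    using assms(2) unfolding pg_adj_def gy_carrier_def by (auto intro!: exI[of _ 2])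
qed

lemma pg_adj_high_iff:
  assumes "2^(n-1) \<le> h" and "h < 2^n"
  shows "pg_adj n u h \<longleftrightarrow> u = 0"
proof
  assume adj: "pg_adj n u h"
  have h_pos: "0 < h"
    using assms(1) by (rule gt_0_if_pow2_le)
  have h_not_power: "gy_pow n u k \<noteq> h" if "1 \<le> k" for k
  proof (cases "u < 2^(n-1)")
    case True
    have "k * u mod 2^(n-1) < 2^(n-1)"
      by simp
    then show ?thesis
      using gy_pow_low[OF True that] assms(1) by linarith
  next
    case False
    then show ?thesis
      using gy_pow_high[of n u k] adj that h_pos by (auto simp: pg_adj_def gy_carrier_def)
  qed
  obtain k where "1 \<le> k" "gy_pow n h k = u"
    using adj h_not_power unfolding pg_adj_def by blast
  then show "u = 0"
    using gy_pow_high[OF assms] adj by (auto simp: pg_adj_def split: if_splits)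
next
  assume "u = 0"
  then show "pg_adj n u h"
    using pg_adj_zero_high[OF assms] by simp
qed

lemma Least_relpow_eq_1:
  assumes "(u, v) \<in> R" and "u \<noteq> v"
  shows "(LEAST k. (u, v) \<in> R ^^ k) = 1"
proof (rule Least_equality)
  fix k assume "(u, v) \<in> R ^^ k"
  then show "1 \<le> k"
    using assms(2) by (cases k) auto
qed (use assms(1) in simp)

lemma Least_relpow_eq_2:
  assumes "(u, c) \<in> R" and "(c, v) \<in> R" and "(u, v) \<notin> R" and "u \<noteq> v"
  shows "(LEAST k. (u, v) \<in> R ^^ k) = 2"
proof (rule Least_equality)
  show "(u, v) \<in> R ^^ 2"
    using assms(1,2) by (auto simp: numeral_2_eq_2 relpow_Suc_I)
  fix k assume "(u, v) \<in> R ^^ k"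
  then show "2 \<le> k"
    using assms(3,4) by (cases "k < 2") (auto simp: less_2_cases_iff)
qed

lemma sum_inverse_distance_dominating_vertex:
  assumes "finite V" and "c \<in> V" and "v \<in> V"
    and dominating: "\<And>u. u \<in> V \<Longrightarrow> u \<noteq> c \<Longrightarrow> (u, c) \<in> R \<and> (c, u) \<in> R"
  shows "(\<Sum>u \<in> V - {v}. 1 / real (LEAST k. (u, v) \<in> R ^^ k))
    = (real (card V) - 1 + real (card {u \<in> V - {v}. (u, v) \<in> R})) / 2"
proof -
  have inverse_distance: "1 / real (LEAST k. (u, v) \<in> R ^^ k) = 1/2 + (if (u, v) \<in> R then 1/2 else 0)"
    if u: "u \<in> V - {v}" for u
  proof (cases "(u, v) \<in> R")
    case True
    then show ?thesis
      using u Least_relpow_eq_1[of u v R] by simp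
  next
    case False
    then have "u \<noteq> c" "v \<noteq> c"
      using u dominating assms(3) by auto
    then show ?thesis
      using False u dominating assms(3) Least_relpow_eq_2[of u c R v] by simp
  qed
  have "(\<Sum>u \<in> V - {v}. 1 / real (LEAST k. (u, v) \<in> R ^^ k))
      = (\<Sum>u \<in> V - {v}. 1/2) + (\<Sum>u \<in> V - {v}. if (u, v) \<in> R then 1/2 else 0)"
    by (simp add: inverse_distance sum.distrib)
  also have "\<dots> = real (card (V - {v})) / 2 + real (card {u \<in> V - {v}. (u, v) \<in> R}) / 2"
    using assms(1) by (simp add: sum.inter_filter[symmetric])
  moreover have "real (card (V - {v})) = real (card V) - 1"
    using assms(1,3) card_gt_0_iff[of V] by (auto simp: of_nat_diff)
  ultimately show ?thesis
    by (simp add: add_divide_distrib)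
qed

lemma gy_carrier_cases:
  assumes "u \<in> gy_carrier n"
  obtains "u < 2^(n-1)" | "2^(n-1) \<le> u" "u < 2^n"
  using assms by (force simp: gy_carrier_def)

lemma pg_neighbours_zero: "{u. pg_adj n u 0} = gy_carrier n - {0}"
proof -
  have "pg_adj n u 0" if "u \<in> gy_carrier n" "u \<noteq> 0" for u
    using that(1)
  proof (cases rule: gy_carrier_cases)
    case 1
    then show ?thesis
      using pg_adj_low_low[of u n 0] that(2) by simp
  next
    case 2
    then show ?thesis
      using pg_adj_zero_high[of n u] pg_adj_sym[of n u 0] by blast
  qed
  then show ?thesis
    using pg_adj_carrier[of n _ 0] pg_adj_irrefl[of n 0] by blast
qed

lemma pg_neighbours_low:
  assumes "0 < p" and "p < 2^(n-1)"
  shows "{u. pg_adj n u p} = {0..<2^(n-1)} - {p}"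
proof -
  have "pg_adj n u p \<longleftrightarrow> u < 2^(n-1) \<and> u \<noteq> p" for u
  proof (cases "u \<in> gy_carrier n")
    case True
    then show ?thesis
    proof (cases rule: gy_carrier_cases)
      case 1
      then show ?thesis
        using pg_adj_low_low[of u n p] assms(2) pg_adj_irrefl[of n p] by auto
    next
      case 2
      then show ?thesis
        using pg_adj_high_iff[of n u p] pg_adj_sym[of n u p] assms(1) by auto
    qed
  next
    case False
    then show ?thesis
      using low_in_gy_carrier[of u n] pg_adj_carrier[of n u p] by auto
  qed
  then show ?thesis
    by (simp add: set_eq_iff)
qed

lemma pg_neighbours_high:
  assumes "2^(n-1) \<le> h" and "h < 2^n"
  shows "{u. pg_adj n u h} = {0}"
  using pg_adj_high_iff[OF assms] by auto

lemma recip_status_eq_degree: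
  assumes "v \<in> gy_carrier n"
  shows "recip_status n v = (2^n - 1 + real (card {u. pg_adj n u v})) / 2"
proof -
  have "0 \<in> gy_carrier n"
    by (simp add: gy_carrier_def)
  moreover have "(u, 0) \<in> pg_edges n \<and> (0, u) \<in> pg_edges n"
    if "u \<in> gy_carrier n" "u \<noteq> 0" for u
    using that pg_neighbours_zero pg_adj_sym unfolding pg_edges_def by blast
  moreover have "{u \<in> gy_carrier n - {v}. (u, v) \<in> pg_edges n} = {u. pg_adj n u v}"
    by (auto simp: pg_edges_def pg_adj_def)
  ultimately show ?thesis
    unfolding recip_status_def pg_dist_def
    using sum_inverse_distance_dominating_vertex[of "gy_carrier n" 0 v "pg_edges n"] assms
    by (simp add: gy_carrier_def)
qed

lemma recip_status_zero: "recip_status n 0 = 2^n - 1"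
proof -
  have "real (card (gy_carrier n - {0})) = 2^n - 1"
    by (simp add: gy_carrier_def of_nat_diff)
  then show ?thesis
    using recip_status_eq_degree[of 0 n] by (simp add: pg_neighbours_zero gy_carrier_def)
qed

lemma recip_status_low:
  assumes "0 < p" and "p < 2^(n-1)"
  shows "recip_status n p = 3/2 * 2^(n-1) - 1"
proof -
  have "0 < n - 1"
    using assms by (cases "n - 1") auto
  then have "(2::real)^n = 2 * 2^(n-1)"
    by (simp add: power_eq_if)
  moreover have "p \<in> gy_carrier n"
    using assms(2) by (rule low_in_gy_carrier)
  ultimately show ?thesis
    using recip_status_eq_degree[of p n] assms by (simp add: pg_neighbours_low of_nat_diff)
qed

lemma recip_status_high:
  assumes "2^(n-1) \<le> h" and "h < 2^n"
  shows "recip_status n h = 2^(n-1)"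
proof -
  have "0 < n"
    using assms by (cases n) auto
  then have "(2::real)^n = 2 * 2^(n-1)"
    by (simp add: power_eq_if)
  then show ?thesis
    using recip_status_eq_degree[of h n] assms
    by (simp add: pg_neighbours_high gy_carrier_def)
qed

lemma pg_edges_increasing:
  "{(u, v). pg_adj n u v \<and> u < v} =
     Pair 0 ` {1..<2^(n-1)} \<union> Pair 0 ` {2^(n-1)..<2^n}
     \<union> {(p, q). p \<in> {1..<2^(n-1)} \<and> q \<in> {1..<2^(n-1)} \<and> p < q}"
  (is "?E = ?A \<union> ?B \<union> ?C")
proof
  show "?E \<subseteq> ?A \<union> ?B \<union> ?C"
  proof
    fix e assume "e \<in> ?E"
    then obtain u v where e: "e = (u, v)" and adj: "pg_adj n u v" and "u < v"
      by blast
    then have "v \<in> gy_carrier n"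
      using pg_adj_carrier[of n v u] pg_adj_sym[of n u v] by blast
    then show "e \<in> ?A \<union> ?B \<union> ?C"
    proof (cases rule: gy_carrier_cases)
      case 1
      then show ?thesis
        using e \<open>u < v\<close> by (cases "u = 0") auto
    next
      case 2
      then show ?thesis
        using e adj pg_adj_high_iff[of n v u] by auto
    qed
  qed
next
  show "?A \<union> ?B \<union> ?C \<subseteq> ?E"
    using pg_adj_low_low[of _ n] pg_adj_zero_high[of n] gt_0_if_pow2_le[of "n-1"] by auto
qed

lemma H_rs_eq:
  assumes "1 \<le> n"
  shows "H_rs n x =
      real (2^(n-1) - 1) * x powr ((2^n - 1) + (3/2 * 2^(n-1) - 1))
    + real (2^(n-1)) * x powr ((2^n - 1) + 2^(n-1))
    + real ((2^(n-1) - 1) choose 2) * x powr (2 * (3/2 * 2^(n-1) - 1))"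
proof -
  define f where "f = (\<lambda>(u, v). x powr (recip_status n u + recip_status n v))"
  define A where "A = Pair (0::nat) ` {1..<(2::nat)^(n-1)}"
  define B where "B = Pair (0::nat) ` {(2::nat)^(n-1)..<2^n}"
  define C where "C = {(p, q). p \<in> {1..<2^(n-1)} \<and> q \<in> {1..<(2::nat)^(n-1)} \<and> p < q}"
  have "finite C"
    unfolding C_def by (rule finite_subset[of _ "{1..<2^(n-1)} \<times> {1..<2^(n-1)}"]) auto
  have "H_rs n x = sum f (A \<union> B \<union> C)"
    unfolding H_rs_def pg_edges_increasing f_def A_def B_def C_def ..
  also have "\<dots> = sum f (A \<union> B) + sum f C"
    using \<open>finite C\<close> by (intro sum.union_disjoint) (auto simp: A_def B_def C_def)
  also have "sum f (A \<union> B) = sum f A + sum f B"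
    by (intro sum.union_disjoint) (auto simp: A_def B_def)
  also have "sum f A = (\<Sum>p \<in> {1..<(2::nat)^(n-1)}. x powr ((2^n - 1) + (3/2 * 2^(n-1) - 1)))"
    unfolding A_def f_def
    by (subst sum.reindex) (auto simp: inj_on_def recip_status_zero recip_status_low intro!: sum.cong)
  also have "sum f B = (\<Sum>h \<in> {(2::nat)^(n-1)..<2^n}. x powr ((2^n - 1) + 2^(n-1)))"
    unfolding B_def f_def
    by (subst sum.reindex) (auto simp: inj_on_def recip_status_zero recip_status_high intro!: sum.cong)
  also have "sum f C = (\<Sum>pq \<in> C. x powr (2 * (3/2 * 2^(n-1) - 1)))"
    by (intro sum.cong) (auto simp: C_def f_def recip_status_low)
  also have "\<dots> = real ((2^(n-1) - 1) choose 2) * x powr (2 * (3/2 * 2^(n-1) - 1))"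
    using card_increasing_pairs[of "{1..<(2::nat)^(n-1)}"] by (simp add: C_def)
  finally show ?thesis
    using assms by (cases n) auto
qed

theorem mainTheorem5:
  fixes n :: nat and x :: real
  assumes "n \<ge> 3" and "x > 0"
  shows "H_rs n x =
      real (2^(n-1) - 1) * x powr ((2^(n+2) - 2^(n-1) - 4) / 2)
    + real (2^(n-1)) * x powr (2^n + 2^(n-1) - 1)
    + real ((2^(n-1) - 1) choose 2) * x powr (2^n + 2^(n-1) - 2)"
proof -
  have "(2::real)^n = 2 * 2^(n-1)" "(2::real)^(n+2) = 8 * 2^(n-1)"
    using assms(1) by (cases n; simp)+
  then have exponents:
      "((2::real)^(n+2) - 2^(n-1) - 4) / 2 = (2^n - 1) + (3/2 * 2^(n-1) - 1)"
      "(2::real)^n + 2^(n-1) - 1 = (2^n - 1) + 2^(n-1)"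
      "(2::real)^n + 2^(n-1) - 2 = 2 * (3/2 * 2^(n-1) - 1)"
    by simp_all
  have "1 \<le> n"
    using assms(1) by simp
  then show ?thesis
    unfolding exponents by (rule H_rs_eq)
qed

end
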